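(* Let $\mathfrak n=W\oplus\mathfrak z$ be a finite-dimensional 2-step nilpotent Lie algebra over a field $k$ of characteristic zero with center $\mathfrak z$ and linear complement $W$, and let $\delta$ be a Lie bialgebra cobracket on $\mathfrak n$. Then: (1) $\delta_1:W\to\Lambda^2W$ is a Lie coalgebra structure on $W$ (i.e. satisfies co-Jacobi); (2) if moreover $\delta(\mathfrak z)\subseteq\Lambda^2\mathfrak z$, then $T_iS_jT_k+T_kS_jT_i=0$ as maps $W\to W^*$, for all $1\le i,k\le\dim\mathfrak z$ and all $1\le j\le\dim W$.
   Context: A Lie bialgebra is a Lie algebra $\mathfrak g$ with a linear map $\delta:\mathfrak g\to\Lambda^2\mathfrak g$ satisfying co-Jacobi (in Sweedler notation $\delta(x)=x_1\wedge x_2$: $\delta(x_1)\wedge x_2-x_1\wedge\delta(x_2)=0$ in $\Lambda^3\mathfrak g$) and the 1-cocycle condition $\delta[x,y]=[\delta x,y]+[x,\delta y]$ (adjoint action on $\Lambda^2$). Using $\Lambda^2\mathfrak n=\Lambda^2W\oplus W\wedge\mathfrak z\oplus\Lambda^2\mathfrak z$, $\delta_1(v)$ for $v\in W$ denotes the $\Lambda^2W$-component of $\delta(v)$. Fix bases $\{z_i\}$ of $\mathfrak z$ and $\{\lambda_j\}$ of $W^*$. Define $T_i:W\to W^*$ by $[v,w]=\sum_iT_i(v)(w)z_i$ for $v,w\in W$. Let $[\,,\,]^*:W^*\times W^*\to W^*$ be the transpose of $\delta_1$: if $\delta_1(v)=v_1\wedge v_2$ then $[\lambda,\mu]^*(v)=\lambda(v_1)\mu(v_2)$.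 Define $S_j:W^*\to W\cong W^{**}$ by $[\lambda,\mu]^*=\sum_jS_j(\mu)(\lambda)\lambda_j$. *)

theory Defs
  imports Main
begin

text \<open>The Lie algebra n has dimension N = m + p with a basis
  e_0,...,e_(N-1) adapted to n = W + z: e_0..e_(m-1) is a basis of W and
  z_i = e_(m+i) (i < p) is a basis of z. Vectors are coordinate functions
  nat => 'k (only indices below the dimension matter). The bracket is given by
  structure constants C, the cobracket by the tensor D:
  delta(e_a) = sum_(b,c) D a b c (e_b tensor e_c), where Lambda^2 is identified
  with antisymmetric 2-tensors and Lambda^3 with alternating 3-tensors.\<close>

definition unitv :: "nat \<Rightarrow> nat \<Rightarrow> 'k::field_char_0" where
  "unitv u = (\<lambda>a. if a = u then 1 else 0)"

definition lbr :: "nat \<Rightarrow> (nat \<Rightarrow> nat \<Rightarrow> nat \<Rightarrow> 'k::field_char_0)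
    \<Rightarrow> (nat \<Rightarrow> 'k) \<Rightarrow> (nat \<Rightarrow> 'k) \<Rightarrow> (nat \<Rightarrow> 'k)" where
  "lbr N C x y = (\<lambda>c. \<Sum>a<N. \<Sum>b<N. x a * y b * C a b c)"

definition lie_algebra :: "nat \<Rightarrow> (nat \<Rightarrow> nat \<Rightarrow> nat \<Rightarrow> 'k::field_char_0) \<Rightarrow> bool" where
  "lie_algebra N C \<longleftrightarrow>
     (\<forall>x c. c < N \<longrightarrow> lbr N C x x c = 0) \<and>
     (\<forall>x y w c. c < N \<longrightarrow>
        lbr N C x (lbr N C y w) c + lbr N C y (lbr N C w x) c + lbr N C w (lbr N C x y) c = 0)"

definition cob :: "nat \<Rightarrow> (nat \<Rightarrow> nat \<Rightarrow> nat \<Rightarrow> 'k::field_char_0)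
    \<Rightarrow> (nat \<Rightarrow> 'k) \<Rightarrow> nat \<Rightarrow> nat \<Rightarrow> 'k" where
  "cob N D x = (\<lambda>b c. \<Sum>a<N. x a * D a b c)"

definition alt3 :: "(nat \<Rightarrow> nat \<Rightarrow> nat \<Rightarrow> 'k::field_char_0) \<Rightarrow> nat \<Rightarrow> nat \<Rightarrow> nat \<Rightarrow> 'k" where
  "alt3 t d f c = t d f c + t f c d + t c d f - t f d c - t d c f - t c f d"

text \<open>co-Jacobi: delta(x_1) wedge x_2 - x_1 wedge delta(x_2) = 0 in Lambda^3; this element
  equals (up to the nonzero factor 2) the alternation of (delta tensor id)(delta x).\<close>
definition cojacobi :: "nat \<Rightarrow> (nat \<Rightarrow> nat \<Rightarrow> nat \<Rightarrow> 'k::field_char_0) \<Rightarrow> bool" where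
  "cojacobi N D \<longleftrightarrow>
     (\<forall>x d f c. d < N \<longrightarrow> f < N \<longrightarrow> c < N \<longrightarrow>
        alt3 (\<lambda>d f c. \<Sum>b<N. cob N D x b c * cob N D (unitv b) d f) d f c = 0)"

definition lie_coalgebra :: "nat \<Rightarrow> (nat \<Rightarrow> nat \<Rightarrow> nat \<Rightarrow> 'k::field_char_0) \<Rightarrow> bool" where
  "lie_coalgebra N D \<longleftrightarrow>
     (\<forall>x b c. b < N \<longrightarrow> c < N \<longrightarrow> cob N D x b c = - cob N D x c b) \<and> cojacobi N D"

definition act2 :: "nat \<Rightarrow> (nat \<Rightarrow> nat \<Rightarrow> nat \<Rightarrow> 'k::field_char_0)
    \<Rightarrow> (nat \<Rightarrow> 'k) \<Rightarrow> (nat \<Rightarrow> nat \<Rightarrow> 'k) \<Rightarrow> nat \<Rightarrow> nat \<Rightarrow> 'k" where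
  "act2 N C x t = (\<lambda>b c. (\<Sum>u<N. lbr N C x (unitv u) b * t u c)
                       + (\<Sum>v<N. t b v * lbr N C x (unitv v) c))"

definition cocycle :: "nat \<Rightarrow> (nat \<Rightarrow> nat \<Rightarrow> nat \<Rightarrow> 'k::field_char_0)
    \<Rightarrow> (nat \<Rightarrow> nat \<Rightarrow> nat \<Rightarrow> 'k) \<Rightarrow> bool" where
  "cocycle N C D \<longleftrightarrow>
     (\<forall>x y b c. b < N \<longrightarrow> c < N \<longrightarrow>
        cob N D (lbr N C x y) b c = act2 N C x (cob N D y) b c - act2 N C y (cob N D x) b c)"

definition lie_bialgebra :: "nat \<Rightarrow> (nat \<Rightarrow> nat \<Rightarrow> nat \<Rightarrow> 'k::field_char_0)
    \<Rightarrow> (nat \<Rightarrow> nat \<Rightarrow> nat \<Rightarrow> 'k) \<Rightarrow> bool" where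
  "lie_bialgebra N C D \<longleftrightarrow> lie_algebra N C \<and> lie_coalgebra N D \<and> cocycle N C D"

definition center :: "nat \<Rightarrow> (nat \<Rightarrow> nat \<Rightarrow> nat \<Rightarrow> 'k::field_char_0) \<Rightarrow> (nat \<Rightarrow> 'k) set" where
  "center N C = {x. \<forall>y c. c < N \<longrightarrow> lbr N C x y c = 0}"

definition two_step_nilpotent :: "nat \<Rightarrow> (nat \<Rightarrow> nat \<Rightarrow> nat \<Rightarrow> 'k::field_char_0) \<Rightarrow> bool" where
  "two_step_nilpotent N C \<longleftrightarrow>
     (\<forall>x y w c. c < N \<longrightarrow> lbr N C x (lbr N C y w) c = 0) \<and>
     (\<exists>x y c. c < N \<and> lbr N C x y c \<noteq> 0)"

text \<open>delta_1(v): the Lambda^2 W component of delta(v), v in W (cobracket tensor of W).\<close>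
definition delta1 :: "nat \<Rightarrow> (nat \<Rightarrow> nat \<Rightarrow> nat \<Rightarrow> 'k::field_char_0) \<Rightarrow> nat \<Rightarrow> nat \<Rightarrow> nat \<Rightarrow> 'k" where
  "delta1 m D = (\<lambda>a b c. if a < m \<and> b < m \<and> c < m then D a b c else 0)"

definition Wpart :: "nat \<Rightarrow> (nat \<Rightarrow> 'k::field_char_0) \<Rightarrow> nat \<Rightarrow> 'k" where
  "Wpart m v = (\<lambda>a. if a < m then v a else 0)"

text \<open>T_i : W \<rightarrow> W^*, [v,w] = sum_i T_i(v)(w) z_i; elements of W^* are given by their
  values on the basis e_0..e_(m-1) of W (i.e. coordinates in the dual basis lambda_j).\<close>
definition Tmap :: "nat \<Rightarrow> nat \<Rightarrow> (nat \<Rightarrow> nat \<Rightarrow> nat \<Rightarrow> 'k::field_char_0)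
    \<Rightarrow> nat \<Rightarrow> (nat \<Rightarrow> 'k) \<Rightarrow> nat \<Rightarrow> 'k" where
  "Tmap m p C i v = (\<lambda>b. lbr (m + p) C (Wpart m v) (unitv b) (m + i))"

text \<open>[lambda,mu]^* (v) = lambda(v_1) mu(v_2) where delta_1(v) = v_1 wedge v_2 (pairing of
  lambda tensor mu with the tensor delta_1(v)); result as W^* coordinates.\<close>
definition dual_br :: "nat \<Rightarrow> (nat \<Rightarrow> nat \<Rightarrow> nat \<Rightarrow> 'k::field_char_0)
    \<Rightarrow> (nat \<Rightarrow> 'k) \<Rightarrow> (nat \<Rightarrow> 'k) \<Rightarrow> nat \<Rightarrow> 'k" where
  "dual_br m D l \<mu> = (\<lambda>a. \<Sum>b<m. \<Sum>c<m. l b * \<mu> c * cob m (delta1 m D) (unitv a) b c)"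

text \<open>S_j : W^* \<rightarrow> W = W^**, [lambda,mu]^* = sum_j S_j(mu)(lambda) lambda_j, with lambda_j the
  dual basis of e_0..e_(m-1). S_j(mu) is given by its coordinates S_j(mu)(lambda_b).\<close>
definition Smap :: "nat \<Rightarrow> (nat \<Rightarrow> nat \<Rightarrow> nat \<Rightarrow> 'k::field_char_0)
    \<Rightarrow> nat \<Rightarrow> (nat \<Rightarrow> 'k) \<Rightarrow> nat \<Rightarrow> 'k" where
  "Smap m D j \<mu> = (\<lambda>b. dual_br m D (unitv b) \<mu> j)"

end

theory Submission
  imports Defs
begin

text \<open>For central z the cocycle identity reduces to x.delta(z) = 0, because ad z = 0. Taking
  x = e_s in W and reading off the z-by-W component, each column of the Lambda^2 W part of delta(z)
  is a vector of W whose brackets with W vanish; as W meets the center trivially, that part is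
  zero. So the W-block of the co-Jacobi identity for delta only involves delta_1, which is
  therefore co-Jacobi itself. If moreover delta(z) lies in Lambda^2 z, the z-by-W component of
  delta[e_s, e_t] = 0 yields an exchange law between the T_i and delta_1; together with the
  antisymmetry of both, three exchanges carry T_k S_j T_i around to - T_i S_j T_k.\<close>

lemma sum_unitv_mult [simp]: "(\<Sum>a'<N. unitv a a' * f a') = (if a < N then f a else 0)"
proof -
  have "(\<Sum>a'<N. unitv a a' * f a') = (\<Sum>a'<N. if a' = a then f a' else 0)"
    by (rule sum.cong) (auto simp: unitv_def)
  then show ?thesis by simp
qed

lemma sum_lessThan_truncate:
  fixes m N :: nat
  assumes "m \<le> N" and "\<And>a. m \<le> a \<Longrightarrow> a < N \<Longrightarrow> g a = 0"
  shows "(\<Sum>a<N. g a) = (\<Sum>a<m. g a)"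
proof (rule sum.mono_neutral_right)
  show "\<forall>a\<in>{..<N} - {..<m}. g a = 0"
    using assms(2) by (simp add: not_less)
qed (use assms(1) in auto)

lemma sum_mult_sum_swap:
  fixes f :: "'i \<Rightarrow> 'a::semiring_0"
  shows "(\<Sum>c\<in>A. f c * (\<Sum>a\<in>B. g a c)) = (\<Sum>a\<in>B. \<Sum>c\<in>A. f c * g a c)"
  using sum.swap[of "\<lambda>c a. f c * g a c" B A] by (simp add: sum_distrib_left)

lemma lbr_unitv:
  assumes "a < N" "b < N"
  shows "lbr N C (unitv a) (unitv b) c = C a b c"
proof -
  have "lbr N C (unitv a) (unitv b) c = (\<Sum>a'<N. unitv a a' * (\<Sum>b'<N. unitv b b' * C a' b' c))"
    unfolding lbr_def by (simp add: sum_distrib_left mult.assoc del: sum_unitv_mult)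
  then show ?thesis
    using assms by simp
qed

lemma cob_unitv: "a < N \<Longrightarrow> cob N D (unitv a) b c = D a b c"
  by (simp add: cob_def)

lemma Wpart_unitv: "b < m \<Longrightarrow> Wpart m (unitv b) = unitv b"
  by (auto simp: Wpart_def unitv_def)

lemma cob_delta1:
  assumes "b < m" "c < m"
  shows "cob m (delta1 m D) x b c = cob (m + p) D (Wpart m x) b c"
proof -
  have "cob (m + p) D (Wpart m x) b c = (\<Sum>a<m. Wpart m x a * D a b c)"
    unfolding cob_def by (rule sum_lessThan_truncate) (simp_all add: Wpart_def)
  then show ?thesis
    using assms by (auto simp: cob_def delta1_def Wpart_def intro!: sum.cong)
qed

lemma lbr_add_left: "lbr N C (\<lambda>z. x z + y z) w c = lbr N C x w c + lbr N C y w c"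
  by (simp add: lbr_def algebra_simps sum.distrib)

lemma lbr_add_right: "lbr N C w (\<lambda>z. x z + y z) c = lbr N C w x c + lbr N C w y c"
  by (simp add: lbr_def algebra_simps sum.distrib)

lemma lbr_antisym:
  assumes "lie_algebra N C" and "c < N"
  shows "lbr N C y x c = - lbr N C x y c"
proof -
  have alt: "lbr N C u u c = 0" for u
    using assms unfolding lie_algebra_def by blast
  have "0 = lbr N C (\<lambda>z. x z + y z) (\<lambda>z. x z + y z) c"
    by (rule alt[symmetric])
  also have "\<dots> = lbr N C x y c + lbr N C y x c"
    by (simp add: lbr_add_left lbr_add_right alt)
  finally show ?thesis
    by (simp add: eq_neg_iff_add_eq_0 add.commute)
qed

lemma structure_const_antisym:
  assumes "lie_algebra N C" and "a < N" "b < N" "c < N"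
  shows "C b a c = - C a b c"
  using lbr_antisym[OF assms(1,4), of "unitv a" "unitv b"] by (simp add: lbr_unitv assms)

lemma Tmap_coord:
  assumes "b < m + p"
  shows "Tmap m p C i u b = (\<Sum>a<m. u a * C a b (m + i))"
proof -
  have "Tmap m p C i u b = (\<Sum>a<m + p. Wpart m u a * (\<Sum>b'<m + p. unitv b b' * C a b' (m + i)))"
    unfolding Tmap_def lbr_def
    by (simp add: sum_distrib_left mult.assoc del: sum_unitv_mult)
  also have "\<dots> = (\<Sum>a<m + p. Wpart m u a * C a b (m + i))"
    using assms by simp
  also have "\<dots> = (\<Sum>a<m. u a * C a b (m + i))"
    by (subst sum_lessThan_truncate[of m]) (simp_all add: Wpart_def)
  finally show ?thesis .
qed

lemma Smap_coord:
  assumes "j < m" "b < m"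
  shows "Smap m D j \<mu> b = (\<Sum>c<m. \<mu> c * D j b c)"
proof -
  have cob: "cob m (delta1 m D) (unitv j) b' c = D j b' c" if "b' < m" "c < m" for b' c
    using that assms by (simp add: cob_def delta1_def)
  have "Smap m D j \<mu> b = (\<Sum>b'<m. unitv b b' * (\<Sum>c<m. \<mu> c * D j b' c))"
    unfolding Smap_def dual_br_def by (rule sum.cong) (simp_all add: cob sum_distrib_left mult.assoc)
  also have "\<dots> = (\<Sum>c<m. \<mu> c * D j b c)"
    using assms by simp
  finally show ?thesis .
qed

lemma sum_nested_reorder:
  fixes v :: "'i \<Rightarrow> 'a::comm_semiring_0"
  shows "(\<Sum>a\<in>A. (\<Sum>c\<in>B. (\<Sum>e\<in>E. v e * X e c) * Y a c) * Z a)
       = (\<Sum>e\<in>E. v e * (\<Sum>c\<in>B. X e c * (\<Sum>a\<in>A. Z a * Y a c)))"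
proof -
  have "(\<Sum>a\<in>A. (\<Sum>c\<in>B. (\<Sum>e\<in>E. v e * X e c) * Y a c) * Z a)
      = (\<Sum>a\<in>A. \<Sum>c\<in>B. \<Sum>e\<in>E. v e * X e c * Z a * Y a c)"
    by (simp add: sum_distrib_left sum_distrib_right mult_ac)
  also have "\<dots> = (\<Sum>c\<in>B. \<Sum>a\<in>A. \<Sum>e\<in>E. v e * X e c * Z a * Y a c)"
    by (rule sum.swap)
  also have "\<dots> = (\<Sum>c\<in>B. \<Sum>e\<in>E. \<Sum>a\<in>A. v e * X e c * Z a * Y a c)"
    by (rule sum.cong[OF refl]) (rule sum.swap)
  also have "\<dots> = (\<Sum>e\<in>E. \<Sum>c\<in>B. \<Sum>a\<in>A. v e * X e c * Z a * Y a c)"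
    by (rule sum.swap)
  also have "\<dots> = (\<Sum>e\<in>E. v e * (\<Sum>c\<in>B. X e c * (\<Sum>a\<in>A. Z a * Y a c)))"
    by (simp add: sum_distrib_left mult_ac)
  finally show ?thesis .
qed

lemma Tmap_Smap_Tmap_coord:
  assumes "j < m" "b < m"
  shows "Tmap m p C i (Smap m D j (Tmap m p C k v)) b
       = (\<Sum>e<m. v e * (\<Sum>c<m. C e c (m + k) * (\<Sum>a<m. C a b (m + i) * D j a c)))"
proof -
  have "Tmap m p C i (Smap m D j (Tmap m p C k v)) b
      = (\<Sum>a<m. (\<Sum>c<m. (\<Sum>e<m. v e * C e c (m + k)) * D j a c) * C a b (m + i))"
    using assms by (simp add: Tmap_coord Smap_coord trans_less_add1)
  also have "\<dots> = (\<Sum>e<m. v e * (\<Sum>c<m. C e c (m + k) * (\<Sum>a<m. C a b (m + i) * D j a c)))"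
    by (rule sum_nested_reorder)
  finally show ?thesis .
qed

text \<open>For the theorem, G i a b is T_i(e_a)(e_b) and D j a c is the (a, c)-entry of delta_1(e_j);
  the exchange law is the z-by-W component of the cocycle identity for [e_s, e_t] once delta maps
  the center into Lambda^2 z.\<close>

locale compatible_antisym_families =
  fixes m p :: nat and G D :: "nat \<Rightarrow> nat \<Rightarrow> nat \<Rightarrow> 'k::comm_ring_1"
  assumes G_antisym: "i < p \<Longrightarrow> a < m \<Longrightarrow> b < m \<Longrightarrow> G i b a = - G i a b"
    and D_antisym: "j < m \<Longrightarrow> a < m \<Longrightarrow> c < m \<Longrightarrow> D j c a = - D j a c"
    and exchange: "i < p \<Longrightarrow> s < m \<Longrightarrow> t < m \<Longrightarrow> c < m \<Longrightarrow>
      (\<Sum>u<m. G i s u * D t u c) = (\<Sum>u<m. G i t u * D s u c)"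
begin

lemma exchange_antisym_left:
  assumes "i < p" "s < m" "t < m" "c < m"
  shows "(\<Sum>u<m. G i u s * D t u c) = - (\<Sum>u<m. G i t u * D s u c)"
proof -
  have "(\<Sum>u<m. G i u s * D t u c) = - (\<Sum>u<m. G i s u * D t u c)"
    unfolding sum_negf[symmetric] by (rule sum.cong) (simp_all add: G_antisym[OF assms(1,2)])
  then show ?thesis
    using exchange[OF assms] by simp
qed

lemma exchange_antisym_right:
  assumes "i < p" "s < m" "t < m" "c < m"
  shows "(\<Sum>u<m. G i s u * D t c u) = - (\<Sum>u<m. G i t u * D s u c)"
proof -
  have "(\<Sum>u<m. G i s u * D t c u) = - (\<Sum>u<m. G i s u * D t u c)"
    unfolding sum_negf[symmetric] by (rule sum.cong) (simp_all add: D_antisym[OF assms(3) _ assms(4)])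
  then show ?thesis
    using exchange[OF assms] by simp
qed

text \<open>Three applications of the exchange law move the indices around a cycle, at the cost of a sign.\<close>

lemma sum_GGD_rotate:
  assumes "i < p" "k < p" "j < m" "b < m" "e < m"
  shows "(\<Sum>c<m. G k e c * (\<Sum>a<m. G i a b * D j a c))
       = - (\<Sum>c<m. G k b c * (\<Sum>a<m. G i e a * D j a c))"
proof -
  have "(\<Sum>c<m. G k e c * (\<Sum>a<m. G i a b * D j a c))
      = - (\<Sum>c<m. G k e c * (\<Sum>a<m. G i j a * D b a c))"
    by (simp add: exchange_antisym_left assms sum_negf)
  also have "\<dots> = - (\<Sum>a<m. G i j a * (\<Sum>c<m. G k e c * D b a c))"
    by (subst sum_mult_sum_swap) (simp add: sum_distrib_left mult.left_commute)
  also have "\<dots> = (\<Sum>a<m. G i j a * (\<Sum>c<m. G k b c * D e c a))"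
    by (simp add: exchange_antisym_right assms sum_negf)
  also have "\<dots> = (\<Sum>c<m. G k b c * (\<Sum>a<m. G i j a * D e c a))"
    by (subst sum_mult_sum_swap) (simp add: sum_distrib_left mult.left_commute)
  also have "\<dots> = - (\<Sum>c<m. G k b c * (\<Sum>a<m. G i e a * D j a c))"
    by (simp add: exchange_antisym_right assms sum_negf)
  finally show ?thesis .
qed

lemma sum_GGD_symmetric_eq_0:
  assumes "i < p" "k < p" "j < m" "b < m" "e < m"
  shows "(\<Sum>c<m. G k e c * (\<Sum>a<m. G i a b * D j a c))
       + (\<Sum>c<m. G i e c * (\<Sum>a<m. G k a b * D j a c)) = 0"
proof -
  have "G k a b * D j a c = G k b a * D j c a" if "a < m" "c < m" for a c
    using G_antisym[OF assms(2) that(1) assms(4)] D_antisym[OF assms(3) that] by simp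
  then have "(\<Sum>c<m. G i e c * (\<Sum>a<m. G k a b * D j a c))
      = (\<Sum>c<m. \<Sum>a<m. G i e c * (G k b a * D j c a))"
    by (simp add: sum_distrib_left)
  also have "\<dots> = (\<Sum>c<m. G k b c * (\<Sum>a<m. G i e a * D j a c))"
    by (subst sum.swap) (simp add: sum_distrib_left mult_ac)
  finally show ?thesis
    using sum_GGD_rotate[OF assms] by simp
qed

end

locale adapted_two_step =
  fixes m p :: nat and C :: "nat \<Rightarrow> nat \<Rightarrow> nat \<Rightarrow> 'k::field_char_0"
  assumes lie_algebra: "lie_algebra (m + p) C"
    and step2: "c < m + p \<Longrightarrow> lbr (m + p) C x (lbr (m + p) C y w) c = 0"
    and center_iff: "x \<in> center (m + p) C \<longleftrightarrow> (\<forall>a<m. x a = 0)"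
begin

lemma C_antisym: "a < m + p \<Longrightarrow> b < m + p \<Longrightarrow> c < m + p \<Longrightarrow> C b a c = - C a b c"
  by (rule structure_const_antisym[OF lie_algebra])

lemma C_center_left:
  assumes "m \<le> a" "a < m + p" "b < m + p" "c < m + p"
  shows "C a b c = 0"
proof -
  have "unitv a \<in> center (m + p) C"
    using assms(1) by (simp add: center_iff unitv_def)
  then have "lbr (m + p) C (unitv a) (unitv b) c = 0"
    using assms(4) by (simp add: center_def)
  then show ?thesis
    using assms(2,3) by (simp add: lbr_unitv)
qed

lemma C_center_right:
  assumes "m \<le> b" "b < m + p" "a < m + p" "c < m + p"
  shows "C a b c = 0"
  using C_antisym[OF assms(2,3,4)] C_center_left[OF assms] by simp

lemma lbr_W_eq_0:
  assumes "c < m"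
  shows "lbr (m + p) C x y c = 0"
proof -
  have "lbr (m + p) C (lbr (m + p) C x y) w c' = 0" if "c' < m + p" for w c'
    using lbr_antisym[OF lie_algebra that, of w "lbr (m + p) C x y"] step2[OF that] by simp
  then have "lbr (m + p) C x y \<in> center (m + p) C"
    by (simp add: center_def)
  then show ?thesis
    using assms by (simp add: center_iff)
qed

lemma C_W_eq_0: "c < m \<Longrightarrow> a < m + p \<Longrightarrow> b < m + p \<Longrightarrow> C a b c = 0"
  using lbr_W_eq_0[of c "unitv a" "unitv b"] by (simp add: lbr_unitv)

lemma sum_C_truncate:
  assumes "s < m + p" "b < m + p"
  shows "(\<Sum>u<m + p. C s u b * X u) = (\<Sum>u<m. C s u b * X u)"
  by (rule sum_lessThan_truncate) (simp_all add: C_center_right assms)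

text \<open>In coordinates: W meets the center trivially.\<close>

lemma W_vector_eq_0:
  assumes commutes: "\<And>s i. s < m \<Longrightarrow> i < p \<Longrightarrow> (\<Sum>u<m. C s u (m + i) * w u) = 0"
    and "d < m"
  shows "w d = 0"
proof -
  have inner: "(\<Sum>u<m + p. Wpart m w u * C a u c) = 0"
    if a: "a < m + p" and c: "c < m + p" for a c
  proof (cases "m \<le> c \<and> a < m")
    case True
    then obtain i where c_eq: "c = m + i" and "i < p"
      using c le_Suc_ex by fastforce
    have "(\<Sum>u<m + p. Wpart m w u * C a u c) = (\<Sum>u<m + p. C a u c * Wpart m w u)"
      by (simp add: mult.commute)
    also have "\<dots> = (\<Sum>u<m. C a u c * Wpart m w u)"
      by (rule sum_C_truncate[OF a c])
    also have "\<dots> = (\<Sum>u<m. C a u (m + i) * w u)"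
      by (simp add: Wpart_def c_eq)
    finally show ?thesis
      using commutes True \<open>i < p\<close> by simp
  next
    case False
    then show ?thesis
      by (intro sum.neutral) (auto simp: a c C_W_eq_0 C_center_left not_le)
  qed
  have "lbr (m + p) C (Wpart m w) y c = 0" if "c < m + p" for y c
  proof -
    have "lbr (m + p) C y (Wpart m w) c = (\<Sum>a<m + p. y a * (\<Sum>u<m + p. Wpart m w u * C a u c))"
      unfolding lbr_def by (simp add: sum_distrib_left mult.assoc)
    also have "\<dots> = 0"
      using inner that by simp
    finally show ?thesis
      using lbr_antisym[OF lie_algebra that, of y "Wpart m w"] by simp
  qed
  then have "Wpart m w \<in> center (m + p) C"
    by (simp add: center_def)
  then show ?thesis
    using \<open>d < m\<close> by (simp add: center_iff Wpart_def)
qed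

end

locale adapted_two_step_bialgebra = adapted_two_step +
  fixes D :: "nat \<Rightarrow> nat \<Rightarrow> nat \<Rightarrow> 'k::field_char_0"
  assumes lie_coalgebra: "lie_coalgebra (m + p) D"
    and cocycle: "cocycle (m + p) C D"
begin

lemma co_jacobi:
  "d < m + p \<Longrightarrow> f < m + p \<Longrightarrow> c < m + p \<Longrightarrow>
    alt3 (\<lambda>d f c. \<Sum>b<m + p. cob (m + p) D x b c * cob (m + p) D (unitv b) d f) d f c = 0"
  using lie_coalgebra unfolding lie_coalgebra_def cojacobi_def by blast

lemma cob_antisym: "b < m + p \<Longrightarrow> c < m + p \<Longrightarrow> cob (m + p) D x c b = - cob (m + p) D x b c"
  using lie_coalgebra unfolding lie_coalgebra_def by (metis minus_minus)

lemma D_antisym: "a < m + p \<Longrightarrow> b < m + p \<Longrightarrow> c < m + p \<Longrightarrow> D a c b = - D a b c"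
  using cob_antisym[of b c "unitv a"] by (simp add: cob_unitv)

lemma act2_unitv_W:
  assumes "s < m + p" "t < m + p" "b < m + p" "c < m"
  shows "act2 (m + p) C (unitv s) (cob (m + p) D (unitv t)) b c = (\<Sum>u<m. C s u b * D t u c)"
proof -
  have "act2 (m + p) C (unitv s) (cob (m + p) D (unitv t)) b c
      = (\<Sum>u<m + p. lbr (m + p) C (unitv s) (unitv u) b * cob (m + p) D (unitv t) u c)"
    unfolding act2_def using assms(4) by (simp add: lbr_W_eq_0)
  also have "\<dots> = (\<Sum>u<m + p. C s u b * D t u c)"
    by (rule sum.cong) (simp_all add: lbr_unitv cob_unitv assms)
  also have "\<dots> = (\<Sum>u<m. C s u b * D t u c)"
    by (rule sum_C_truncate[OF assms(1,3)])
  finally show ?thesis .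
qed

lemma cocycle_unitv:
  assumes "s < m + p" "t < m + p" "i < p" "c < m"
  shows "cob (m + p) D (lbr (m + p) C (unitv s) (unitv t)) (m + i) c
       = (\<Sum>u<m. C s u (m + i) * D t u c) - (\<Sum>u<m. C t u (m + i) * D s u c)"
  using cocycle assms unfolding cocycle_def by (simp add: act2_unitv_W)

lemma D_center_W_W_eq_0:
  assumes "m \<le> z" "z < m + p" "d < m" "f < m"
  shows "D z d f = 0"
proof (rule W_vector_eq_0[where w = "\<lambda>u. D z u f", OF _ assms(3)])
  fix s i assume "s < m" "i < p"
  then have "s < m + p" by simp
  then have "cob (m + p) D (lbr (m + p) C (unitv s) (unitv z)) (m + i) f = 0"
    unfolding cob_def by (intro sum.neutral) (auto simp: lbr_unitv C_center_right assms)
  moreover have "(\<Sum>u<m. C z u (m + i) * D s u f) = 0"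
    by (rule sum.neutral) (simp add: C_center_left assms \<open>i < p\<close>)
  ultimately show "(\<Sum>u<m. C s u (m + i) * D z u f) = 0"
    using cocycle_unitv[of s z i f] assms \<open>s < m\<close> \<open>i < p\<close> by simp
qed

lemma delta1_lie_coalgebra: "lie_coalgebra m (delta1 m D)"
  unfolding lie_coalgebra_def cojacobi_def
proof (intro conjI allI impI)
  fix x :: "nat \<Rightarrow> 'k" and b c assume "b < m" "c < m"
  then show "cob m (delta1 m D) x b c = - cob m (delta1 m D) x c b"
    using cob_antisym[of b c "Wpart m x"] by (simp add: cob_delta1[where p = p])
next
  fix x :: "nat \<Rightarrow> 'k" and d f c assume "d < m" "f < m" "c < m"
  have sum_eq: "(\<Sum>b<m. cob m (delta1 m D) x b c' * cob m (delta1 m D) (unitv b) d' f')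
      = (\<Sum>b<m + p. cob (m + p) D (Wpart m x) b c' * cob (m + p) D (unitv b) d' f')"
    if "d' < m" "f' < m" "c' < m" for d' f' c'
  proof -
    have "(\<Sum>b<m + p. cob (m + p) D (Wpart m x) b c' * cob (m + p) D (unitv b) d' f')
        = (\<Sum>b<m. cob (m + p) D (Wpart m x) b c' * cob (m + p) D (unitv b) d' f')"
      by (rule sum_lessThan_truncate) (simp_all add: cob_unitv D_center_W_W_eq_0 that)
    also have "\<dots> = (\<Sum>b<m. cob m (delta1 m D) x b c' * cob m (delta1 m D) (unitv b) d' f')"
      by (rule sum.cong) (simp_all add: cob_delta1[where p = p] Wpart_unitv that)
    finally show ?thesis ..
  qed
  have "alt3 (\<lambda>d f c. \<Sum>b<m + p. cob (m + p) D (Wpart m x) b c * cob (m + p) D (unitv b) d f) d f c = 0"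
    using co_jacobi \<open>d < m\<close> \<open>f < m\<close> \<open>c < m\<close> by simp
  then show "alt3 (\<lambda>d f c. \<Sum>b<m. cob m (delta1 m D) x b c * cob m (delta1 m D) (unitv b) d f) d f c = 0"
    unfolding alt3_def by (simp only: sum_eq \<open>d < m\<close> \<open>f < m\<close> \<open>c < m\<close>)
qed

lemma D_exchange:
  assumes center_cob: "\<And>x b c. \<forall>a<m. x a = 0 \<Longrightarrow> b < m + p \<Longrightarrow> c < m \<Longrightarrow> cob (m + p) D x b c = 0"
    and "s < m" "t < m" "i < p" "c < m"
  shows "(\<Sum>u<m. C s u (m + i) * D t u c) = (\<Sum>u<m. C t u (m + i) * D s u c)"
proof -
  have "cob (m + p) D (lbr (m + p) C (unitv s) (unitv t)) (m + i) c = 0"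
    by (rule center_cob) (simp_all add: lbr_W_eq_0 assms)
  then show ?thesis
    using cocycle_unitv[of s t i c] assms by simp
qed

lemma Tmap_Smap_Tmap_symmetric_eq_0:
  assumes center_cob: "\<And>x b c. \<forall>a<m. x a = 0 \<Longrightarrow> b < m + p \<Longrightarrow> c < m \<Longrightarrow> cob (m + p) D x b c = 0"
    and "i < p" "k < p" "j < m" "b < m"
  shows "Tmap m p C i (Smap m D j (Tmap m p C k v)) b + Tmap m p C k (Smap m D j (Tmap m p C i v)) b = 0"
proof -
  interpret compatible_antisym_families m p "\<lambda>i a b. C a b (m + i)" D
    by unfold_locales (auto intro: C_antisym D_antisym D_exchange[OF center_cob])
  have "Tmap m p C i (Smap m D j (Tmap m p C k v)) b + Tmap m p C k (Smap m D j (Tmap m p C i v)) b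
      = (\<Sum>e<m. v e * ((\<Sum>c<m. C e c (m + k) * (\<Sum>a<m. C a b (m + i) * D j a c))
                    + (\<Sum>c<m. C e c (m + i) * (\<Sum>a<m. C a b (m + k) * D j a c))))"
    using assms(4,5) by (simp add: Tmap_Smap_Tmap_coord distrib_left sum.distrib)
  also have "\<dots> = 0"
    using sum_GGD_symmetric_eq_0[OF assms(2-5)] by simp
  finally show ?thesis .
qed

end

theorem mainTheorem4:
  fixes m p :: nat
    and C D :: "nat \<Rightarrow> nat \<Rightarrow> nat \<Rightarrow> 'k::field_char_0"
  assumes bialg: "lie_bialgebra (m + p) C D"
    and nil: "two_step_nilpotent (m + p) C"
    and cent: "\<forall>x. x \<in> center (m + p) C \<longleftrightarrow> (\<forall>a<m. x a = 0)"
  shows "lie_coalgebra m (delta1 m D) \<and>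
         ((\<forall>x. (\<forall>a<m. x a = 0) \<longrightarrow>
              (\<forall>b c. b < m + p \<longrightarrow> c < m + p \<longrightarrow> (b < m \<or> c < m) \<longrightarrow> cob (m + p) D x b c = 0))
          \<longrightarrow> (\<forall>i<p. \<forall>k<p. \<forall>j<m. \<forall>v. \<forall>b<m.
                 Tmap m p C i (Smap m D j (Tmap m p C k v)) b
               + Tmap m p C k (Smap m D j (Tmap m p C i v)) b = 0))"
proof -
  interpret adapted_two_step_bialgebra m p C D
    using bialg nil cent
    by unfold_locales (auto simp: lie_bialgebra_def two_step_nilpotent_def)
  show ?thesis
  proof (intro conjI impI allI delta1_lie_coalgebra)
    fix i k j v b
    assume "\<forall>x. (\<forall>a<m. x a = 0) \<longrightarrow>
              (\<forall>b c. b < m + p \<longrightarrow> c < m + p \<longrightarrow> (b < m \<or> c < m) \<longrightarrow> cob (m + p) D x b c = 0)"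
      and "i < p" "k < p" "j < m" "b < m"
    then show "Tmap m p C i (Smap m D j (Tmap m p C k v)) b + Tmap m p C k (Smap m D j (Tmap m p C i v)) b = 0"
      by (intro Tmap_Smap_Tmap_symmetric_eq_0) auto
  qed
qed

end
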